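(* Let $F$ be a field of characteristic zero and let $A$ be an $F$-algebra isomorphic to a direct sum (not necessarily finite) of finite field extensions of $F$ (for instance, a direct sum of copies of $F$). Then the only Rota–Baxter operator of weight zero on $A$ is the zero operator.
   Context: A linear operator $R$ on $A$ is a Rota–Baxter operator of weight $0$ if $R(x)R(y)=R(R(x)y+xR(y))$ for all $x,y\in A$. *)

theory Defs
  imports Main
begin

definition is_subfield :: "'k::field set \<Rightarrow> bool" where
  "is_subfield K \<longleftrightarrow> 0 \<in> K \<and> 1 \<in> K \<and> (\<forall>x\<in>K. \<forall>y\<in>K. x + y \<in> K \<and> x * y \<in> K)
     \<and> (\<forall>x\<in>K. - x \<in> K) \<and> (\<forall>x\<in>K. x \<noteq> 0 \<longrightarrow> inverse x \<in> K)"

definition field_emb :: "('f::field \<Rightarrow> 'k::field) \<Rightarrow> bool" where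
  "field_emb emb \<longleftrightarrow> emb 1 = 1 \<and> (\<forall>a b. emb (a + b) = emb a + emb b) \<and> (\<forall>a b. emb (a * b) = emb a * emb b)"

definition finite_ext :: "('f::field \<Rightarrow> 'k::field) \<Rightarrow> 'k set \<Rightarrow> bool" where
  "finite_ext emb K \<longleftrightarrow> is_subfield K \<and> range emb \<subseteq> K \<and>
     (\<exists>B. finite B \<and> B \<subseteq> K \<and> (\<forall>x\<in>K. \<exists>c. x = (\<Sum>b\<in>B. emb (c b) * b)))"

text \<open>Carrier of the (possibly infinite) direct sum of the K i, i in I: finitely supported
  families; operations are componentwise.\<close>
definition dsum :: "'i set \<Rightarrow> ('i \<Rightarrow> 'k::field set) \<Rightarrow> ('i \<Rightarrow> 'k) set" where
  "dsum I K = {f. (\<forall>i\<in>I. f i \<in> K i) \<and> (\<forall>i. i \<notin> I \<longrightarrow> f i = 0) \<and> finite {i\<in>I. f i \<noteq> 0}}"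

definition F_algebra :: "('f::field \<Rightarrow> 'a::ring \<Rightarrow> 'a) \<Rightarrow> bool" where
  "F_algebra smul \<longleftrightarrow>
     (\<forall>c x y. smul c (x + y) = smul c x + smul c y) \<and>
     (\<forall>c d x. smul (c + d) x = smul c x + smul d x) \<and>
     (\<forall>c d x. smul (c * d) x = smul c (smul d x)) \<and>
     (\<forall>x. smul 1 x = x) \<and>
     (\<forall>c x y. smul c (x * y) = smul c x * y \<and> smul c (x * y) = x * smul c y)"

definition alg_iso_dsum ::
  "('f::field \<Rightarrow> 'a::ring \<Rightarrow> 'a) \<Rightarrow> ('f \<Rightarrow> 'k::field) \<Rightarrow> 'i set \<Rightarrow> ('i \<Rightarrow> 'k set) \<Rightarrow> ('a \<Rightarrow> 'i \<Rightarrow> 'k) \<Rightarrow> bool" where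
  "alg_iso_dsum smul emb I K \<phi> \<longleftrightarrow> bij_betw \<phi> UNIV (dsum I K) \<and>
     (\<forall>x y. \<phi> (x + y) = (\<lambda>i. \<phi> x i + \<phi> y i)) \<and>
     (\<forall>x y. \<phi> (x * y) = (\<lambda>i. \<phi> x i * \<phi> y i)) \<and>
     (\<forall>c x. \<phi> (smul c x) = (\<lambda>i. emb c * \<phi> x i))"

definition F_linear :: "('f::field \<Rightarrow> 'a::ring \<Rightarrow> 'a) \<Rightarrow> ('a \<Rightarrow> 'a) \<Rightarrow> bool" where
  "F_linear smul R \<longleftrightarrow> (\<forall>x y. R (x + y) = R x + R y) \<and> (\<forall>c x. R (smul c x) = smul c (R x))"

definition rota_baxter0 :: "('a::ring \<Rightarrow> 'a) \<Rightarrow> bool" where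
  "rota_baxter0 R \<longleftrightarrow> (\<forall>x y. R x * R y = R (R x * y + x * R y))"

end

theory Submission
  imports Defs "HOL.Vector_Spaces"
begin

text \<open>Let \<open>a = R x\<close>. In a commutative algebra the Rota--Baxter identity gives
  \<open>a\<^sup>n\<^sup>+\<^sup>1 = (n+1) R(a\<^sup>n x)\<close>, so every polynomial in \<open>a\<close> without constant term lies in the
  image of \<open>R\<close>. In a direct sum of finite extensions \<open>a\<close> is algebraic, and a suitable such
  polynomial is the idempotent \<open>e\<close> with components \<open>1\<close> on the support of \<open>a\<close> and \<open>0\<close> elsewhere.
  But an idempotent \<open>e = R z\<close> vanishes: \<open>e = e\<^sup>2 = 2 R(e z)\<close> and \<open>e = e\<^sup>3 = 3 R(e z)\<close>. Hence
  \<open>a = 0\<close>. The argument works over any field.\<close>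

text \<open>\<open>pow_suc a n = a\<^sup>n\<^sup>+\<^sup>1\<close>, since the algebras considered need not have a unit.\<close>
fun pow_suc :: "'a::semigroup_mult \<Rightarrow> nat \<Rightarrow> 'a" where
  "pow_suc a 0 = a"
| "pow_suc a (Suc n) = a * pow_suc a n"

locale comm_rota_baxter_algebra = vector_space smul
  for smul :: "'f::field \<Rightarrow> 'a::ring \<Rightarrow> 'a" +
  fixes R :: "'a \<Rightarrow> 'a"
  assumes mult_commute: "x * y = y * (x::'a)"
    and mult_smul_right: "x * smul c y = smul c (x * y)"
    and R_linear: "F_linear smul R"
    and R_rota_baxter: "rota_baxter0 R"
begin

sublocale R: module_hom smul smul R
  using R_linear by unfold_locales (simp_all add: F_linear_def)

lemma rota_baxter: "R x * R y = R (R x * y + x * R y)"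
  using R_rota_baxter unfolding rota_baxter0_def by blast

lemma pow_suc_R_Suc:
  "pow_suc (R x) (Suc n) = R (smul (of_nat (Suc (Suc n))) (pow_suc (R x) n * x))"
proof (induction n)
  case 0
  have "R x * R x = R (R x * x + x * R x)"
    by (rule rota_baxter)
  also have "R x * x + x * R x = smul (1 + 1) (R x * x)"
    by (simp only: scale_left_distrib scale_one mult_commute[of x])
  finally show ?case
    by simp
next
  case (Suc n)
  let ?a = "R x" and ?c = "of_nat (Suc (Suc n)) :: 'f"
  have "pow_suc ?a (Suc (Suc n)) = ?a * R (smul ?c (pow_suc ?a n * x))"
    using Suc by simp
  also have "\<dots> = R (?a * smul ?c (pow_suc ?a n * x) + x * pow_suc ?a (Suc n))"
    using Suc by (simp add: rota_baxter)
  also have "?a * smul ?c (pow_suc ?a n * x) = smul ?c (pow_suc ?a (Suc n) * x)"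
    by (simp add: mult_smul_right mult.assoc)
  also have "x * pow_suc ?a (Suc n) = pow_suc ?a (Suc n) * x"
    by (rule mult_commute)
  also have "smul ?c (pow_suc ?a (Suc n) * x) + pow_suc ?a (Suc n) * x
      = smul (?c + 1) (pow_suc ?a (Suc n) * x)"
    by (simp only: scale_left_distrib scale_one)
  finally show ?case
    by (simp add: add.commute)
qed

lemma pow_suc_R_in_range: "pow_suc (R x) n \<in> range R"
proof (cases n)
  case (Suc m)
  then show ?thesis using pow_suc_R_Suc[of x m] by (metis rangeI)
qed simp

lemma span_powers_R_subset_range: "span (range (pow_suc (R x))) \<subseteq> range R"
  by (intro span_minimal R.subspace_image subspace_UNIV) (auto intro: pow_suc_R_in_range)

lemma idempotent_in_range_eq_0:
  assumes "e = R z" and "e * e = e"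
  shows "e = 0"
proof -
  define v where "v = R (e * z)"
  have "pow_suc e (Suc n) = e" for n
    by (induction n) (simp_all add: assms(2))
  then have two: "e = smul (of_nat 2) v" and three: "e = smul (of_nat 3) v"
    using pow_suc_R_Suc[of z 0, folded assms(1)] pow_suc_R_Suc[of z 1, folded assms(1)]
    by (simp_all add: v_def assms(2) R.scale numeral_2_eq_2 numeral_3_eq_3)
  have "smul (of_nat 2) v + v = smul (of_nat 3) v"
    using scale_left_distrib[of "of_nat 2" 1 v] by simp
  also have "\<dots> = smul (of_nat 2) v"
    using three[symmetric] two by (rule trans)
  finally have "v = 0"
    by simp
  then show ?thesis
    unfolding two by simp
qed

end

lemma (in vector_space) dependent_sequence_in_finite_span:
  fixes f :: "nat \<Rightarrow> 'b"
  assumes "finite G" and "\<And>n. f n \<in> span G"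
  shows "\<exists>c N. (\<exists>n\<le>N. c n \<noteq> 0) \<and> (\<Sum>n\<le>N. c n *s f n) = 0"
proof (cases "inj_on f {..card G}")
  case True
  define P where "P = f ` {..card G}"
  have "dependent P"
  proof (rule ccontr)
    assume "independent P"
    moreover have "P \<subseteq> span G"
      using assms(2) by (auto simp: P_def)
    ultimately have "card P \<le> card G"
      using independent_span_bound[OF assms(1)] by simp
    with True show False
      by (simp add: P_def card_image)
  qed
  then obtain u where u: "\<exists>v\<in>P. u v \<noteq> 0" "(\<Sum>v\<in>P. u v *s v) = 0"
    by (auto simp: P_def dependent_finite)
  from u(2) have "(\<Sum>n\<le>card G. u (f n) *s f n) = 0"
    by (simp only: P_def sum.reindex[OF True] comp_def)
  moreover obtain n where "n \<le> card G" "u (f n) \<noteq> 0"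
    using u(1) by (auto simp: P_def)
  ultimately show ?thesis
    by (intro exI[of _ "u \<circ> f"] exI[of _ "card G"]) auto
next
  case False
  then obtain j k where jk: "j \<le> card G" "k \<le> card G" "j \<noteq> k" "f j = f k"
    unfolding inj_on_def by auto
  define c :: "nat \<Rightarrow> 'a" where "c n = (if n = j then 1 else 0) - (if n = k then 1 else 0)" for n
  have "c n *s f n = (if n = j then f j else 0) - (if n = k then f k else 0)" for n
    by (simp add: c_def scale_left_diff_distrib)
  then have "(\<Sum>n\<le>card G. c n *s f n) = 0"
    using jk by (simp add: sum_subtractf sum.delta')
  moreover have "c j \<noteq> 0"
    using jk by (simp add: c_def)
  ultimately show ?thesis
    using jk by blast
qed

lemma power_relation_lowest_coeff:
  fixes \<alpha> :: "'k::field" and c :: "nat \<Rightarrow> 'k"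
  assumes "\<alpha> \<noteq> 0" and "m \<le> N" and "\<And>n. n < m \<Longrightarrow> c n = 0"
    and "(\<Sum>n\<le>N. c n * \<alpha> ^ Suc n) = 0"
  shows "(\<Sum>n\<in>{m<..N}. c n * \<alpha> ^ (n - m)) = - c m"
proof -
  have "(\<Sum>n\<le>N. c n * \<alpha> ^ Suc n) = (\<Sum>n=m..N. c n * \<alpha> ^ Suc n)"
    using assms(3) by (intro sum.mono_neutral_right) auto
  also have "\<dots> = \<alpha> ^ Suc m * (\<Sum>n=m..N. c n * \<alpha> ^ (n - m))"
    unfolding sum_distrib_left
  proof (rule sum.cong)
    fix n assume "n \<in> {m..N}"
    then have "Suc m + (n - m) = Suc n" by simp
    then show "c n * \<alpha> ^ Suc n = \<alpha> ^ Suc m * (c n * \<alpha> ^ (n - m))"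
      by (metis mult.left_commute power_add)
  qed simp
  also have "\<dots> = \<alpha> ^ Suc m * (c m + (\<Sum>n\<in>{m<..N}. c n * \<alpha> ^ (n - m)))"
    using assms(2) by (simp add: sum.head)
  finally show ?thesis
    using assms(1,4) by (simp add: eq_neg_iff_add_eq_0 add.commute)
qed

locale dsum_of_finite_extensions =
  fixes smul :: "'f::field \<Rightarrow> 'a::ring \<Rightarrow> 'a"
    and emb :: "'f \<Rightarrow> 'k::field"
    and I :: "'i set" and K :: "'i \<Rightarrow> 'k set"
    and \<phi> :: "'a \<Rightarrow> 'i \<Rightarrow> 'k"
  assumes algebra: "F_algebra smul"
    and embedding: "field_emb emb"
    and finite_extensions: "\<forall>i\<in>I. finite_ext emb (K i)"
    and isomorphism: "alg_iso_dsum smul emb I K \<phi>"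
begin

sublocale vector_space smul
  using algebra unfolding vector_space_def F_algebra_def by auto

lemma mult_smul_right: "x * smul c y = smul c (x * y)"
  using algebra unfolding F_algebra_def by metis

lemma emb_add: "emb (a + b) = emb a + emb b"
  and emb_mult: "emb (a * b) = emb a * emb b"
  and emb_one: "emb 1 = 1"
  using embedding unfolding field_emb_def by auto

lemma emb_zero: "emb 0 = 0"
  using emb_add[of 0 0] by (simp only: add_0_left add_cancel_right_right)

lemma emb_uminus: "emb (- a) = - emb a"
  using emb_add[of a "- a"] by (simp add: emb_zero add_eq_0_iff)

lemma phi_add: "\<phi> (x + y) = (\<lambda>i. \<phi> x i + \<phi> y i)"
  and phi_mult: "\<phi> (x * y) = (\<lambda>i. \<phi> x i * \<phi> y i)"
  and phi_smul: "\<phi> (smul c x) = (\<lambda>i. emb c * \<phi> x i)"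
  and phi_bij: "bij_betw \<phi> UNIV (dsum I K)"
  using isomorphism unfolding alg_iso_dsum_def by auto

lemma phi_inject: "\<phi> x = \<phi> y \<longleftrightarrow> x = y"
  using phi_bij by (auto simp: bij_betw_def inj_on_def)

lemma phi_in_dsum: "\<phi> x \<in> dsum I K"
  using phi_bij by (auto simp: bij_betw_def)

lemma phi_zero: "\<phi> 0 = (\<lambda>i. 0)"
  using phi_add[of 0 0] by (metis add_cancel_right_right fun_eq_iff)

lemma phi_sum: "\<phi> (sum f T) = (\<lambda>i. \<Sum>t\<in>T. \<phi> (f t) i)"
  by (induction T rule: infinite_finite_induct) (auto simp: phi_zero phi_add)

lemma phi_pow_suc: "\<phi> (pow_suc x n) = (\<lambda>i. \<phi> x i ^ Suc n)"
  by (induction n) (auto simp: phi_mult)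

lemma mult_commute: "x * y = y * (x::'a)"
  by (rule phi_inject[THEN iffD1]) (simp add: phi_mult mult.commute)

definition single :: "'i \<Rightarrow> 'k \<Rightarrow> 'a" where
  "single i b = inv \<phi> (\<lambda>j. if j = i then b else 0)"

lemma phi_single:
  assumes "i \<in> I" and "b \<in> K i"
  shows "\<phi> (single i b) = (\<lambda>j. if j = i then b else 0)"
proof -
  have "0 \<in> K j" if "j \<in> I" for j
    using finite_extensions that unfolding finite_ext_def is_subfield_def by blast
  moreover have "finite {j\<in>I. (if j = i then b else 0) \<noteq> 0}"
    by (rule finite_subset[of _ "{i}"]) auto
  ultimately have "(\<lambda>j. if j = i then b else 0) \<in> dsum I K"
    using assms by (auto simp: dsum_def)
  then show ?thesis
    unfolding single_def by (rule bij_betw_inv_into_right[OF phi_bij])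
qed

lemma finite_support_in_finite_span:
  assumes "finite S" and "S \<subseteq> I"
  obtains G where "finite G" and "\<And>y. (\<And>i. i \<notin> S \<Longrightarrow> \<phi> y i = 0) \<Longrightarrow> y \<in> span G"
proof -
  obtain B where B: "\<And>i. i \<in> I \<Longrightarrow> finite (B i) \<and> B i \<subseteq> K i \<and>
      (\<forall>x\<in>K i. \<exists>c. x = (\<Sum>b\<in>B i. emb (c b) * b))"
    using finite_extensions unfolding finite_ext_def by metis
  define G where "G = (\<lambda>(i, b). single i b) ` Sigma S B"
  have "y \<in> span G" if y: "\<And>i. i \<notin> S \<Longrightarrow> \<phi> y i = 0" for y
  proof -
    have "\<forall>i\<in>S. \<exists>c. \<phi> y i = (\<Sum>b\<in>B i. emb (c b) * b)"
      using B phi_in_dsum[of y] assms(2) by (auto simp: dsum_def)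
    then obtain C where C: "\<And>i. i \<in> S \<Longrightarrow> \<phi> y i = (\<Sum>b\<in>B i. emb (C i b) * b)"
      by metis
    define z where "z = (\<Sum>i\<in>S. \<Sum>b\<in>B i. smul (C i b) (single i b))"
    have "\<phi> z j = \<phi> y j" for j
    proof -
      have "\<phi> z j = (\<Sum>i\<in>S. if j = i then \<Sum>b\<in>B i. emb (C i b) * b else 0)"
        unfolding z_def phi_sum phi_smul using assms(2) B phi_single
        by (auto intro!: sum.cong simp: subset_iff sum_distrib_left if_distrib)
      then show ?thesis
        using y C assms(1) by (cases "j \<in> S") auto
    qed
    then have "y = z"
      by (simp add: phi_inject[symmetric] fun_eq_iff)
    moreover have "z \<in> span G"
      unfolding z_def G_def by (intro span_sum span_scale span_base) auto
    ultimately show ?thesis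
      by simp
  qed
  moreover have "finite G"
    unfolding G_def using assms B by (auto intro!: finite_imageI finite_SigmaI)
  ultimately show ?thesis
    using that by blast
qed

lemma pow_suc_dependent:
  obtains c N where "\<exists>n\<le>N. c n \<noteq> 0" and "(\<Sum>n\<le>N. smul (c n) (pow_suc a n)) = 0"
proof -
  define S where "S = {i\<in>I. \<phi> a i \<noteq> 0}"
  have "finite S" and "\<And>i. i \<notin> S \<Longrightarrow> \<phi> a i = 0"
    using phi_in_dsum[of a] by (auto simp: S_def dsum_def)
  moreover obtain G where "finite G"
    and G: "\<And>y. (\<And>i. i \<notin> S \<Longrightarrow> \<phi> y i = 0) \<Longrightarrow> y \<in> span G"
    using finite_support_in_finite_span[OF \<open>finite S\<close>] by (auto simp: S_def)
  ultimately have "pow_suc a n \<in> span G" for n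
    by (intro G) (simp add: phi_pow_suc)
  then show ?thesis
    using dependent_sequence_in_finite_span[OF \<open>finite G\<close>] that by blast
qed

text \<open>If \<open>\<Sum>\<^sub>n c\<^sub>n a\<^sup>n\<^sup>+\<^sup>1 = 0\<close> with lowest nonzero coefficient \<open>c\<^sub>m\<close>, then
  \<open>-c\<^sub>m\<^sup>-\<^sup>1 \<Sum>\<^sub>n\<^sub>>\<^sub>m c\<^sub>n a\<^sup>n\<^sup>-\<^sup>m\<close> is \<open>1\<close> wherever \<open>a\<close> is nonzero and \<open>0\<close> elsewhere.\<close>
lemma support_idempotent_in_span_powers:
  obtains e where "e \<in> span (range (pow_suc a))"
    and "\<phi> e = (\<lambda>i. if \<phi> a i = 0 then 0 else 1)"
proof -
  obtain c N where nonzero: "\<exists>n\<le>N. c n \<noteq> 0"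
    and relation: "(\<Sum>n\<le>N. smul (c n) (pow_suc a n)) = 0"
    by (rule pow_suc_dependent)
  define m where "m = (LEAST n. c n \<noteq> 0)"
  obtain n0 where "n0 \<le> N" and "c n0 \<noteq> 0"
    using nonzero by blast
  then have "c m \<noteq> 0" and "m \<le> N" and below_m: "\<And>n. n < m \<Longrightarrow> c n = 0"
    unfolding m_def using LeastI_ex[of "\<lambda>n. c n \<noteq> 0"]
    by (auto intro: Least_le[THEN order_trans] dest: not_less_Least)
  define w where "w = (\<Sum>n\<in>{m<..N}. smul (c n) (pow_suc a (n - m - 1)))"
  define e where "e = smul (- inverse (c m)) w"
  have phi_w: "\<phi> w i = (\<Sum>n\<in>{m<..N}. emb (c n) * \<phi> a i ^ (n - m))" for i
    unfolding w_def phi_sum phi_smul phi_pow_suc by (intro sum.cong) (auto simp: Suc_diff_Suc)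
  have "\<phi> e i = (if \<phi> a i = 0 then 0 else 1)" for i
  proof (cases "\<phi> a i = 0")
    case True
    then show ?thesis
      unfolding e_def phi_smul phi_w by (auto intro!: sum.neutral)
  next
    case False
    have "(\<Sum>n\<le>N. emb (c n) * \<phi> a i ^ Suc n) = 0"
      using fun_cong[OF arg_cong[where f = \<phi>, OF relation], of i]
      by (simp add: phi_sum phi_smul phi_pow_suc phi_zero)
    then have "\<phi> w i = - emb (c m)"
      unfolding phi_w using False \<open>m \<le> N\<close>
      by (intro power_relation_lowest_coeff) (simp_all add: below_m emb_zero)
    then have "\<phi> e i = emb (inverse (c m) * c m)"
      unfolding e_def phi_smul by (simp add: emb_uminus emb_mult)
    then show ?thesis
      using False \<open>c m \<noteq> 0\<close> by (simp add: emb_one)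
  qed
  moreover have "e \<in> span (range (pow_suc a))"
    unfolding e_def w_def by (intro span_scale span_sum span_base) auto
  ultimately show ?thesis
    using that by auto
qed

lemma rota_baxter_eq_0:
  assumes "F_linear smul R" and "rota_baxter0 R"
  shows "R x = 0"
proof -
  interpret comm_rota_baxter_algebra smul R
    using assms by unfold_locales (simp_all add: mult_commute mult_smul_right)
  obtain e where "e \<in> span (range (pow_suc (R x)))"
    and phi_e: "\<phi> e = (\<lambda>i. if \<phi> (R x) i = 0 then 0 else 1)"
    by (rule support_idempotent_in_span_powers)
  then have "e \<in> range R"
    using span_powers_R_subset_range by blast
  moreover have "e * e = e"
    by (simp add: phi_inject[symmetric] phi_mult phi_e fun_eq_iff)
  ultimately have "e = 0"
    using idempotent_in_range_eq_0 by blast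
  then have "\<phi> (R x) = \<phi> 0"
    using phi_e by (simp add: phi_zero fun_eq_iff split: if_splits)
  then show ?thesis
    by (simp add: phi_inject)
qed

end

theorem corollary8:
  fixes smul :: "'f::field_char_0 \<Rightarrow> 'a::ring \<Rightarrow> 'a"
    and emb :: "'f \<Rightarrow> 'k::field"
    and I :: "'i set" and K :: "'i \<Rightarrow> 'k set"
    and \<phi> :: "'a \<Rightarrow> 'i \<Rightarrow> 'k"
    and R :: "'a \<Rightarrow> 'a"
  assumes "F_algebra smul"
    and "field_emb emb"
    and "\<forall>i\<in>I. finite_ext emb (K i)"
    and "alg_iso_dsum smul emb I K \<phi>"
    and "F_linear smul R"
    and "rota_baxter0 R"
  shows "\<forall>x. R x = 0"
proof -
  interpret dsum_of_finite_extensions smul emb I K \<phi>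
    using assms(1-4) by unfold_locales
  show ?thesis
    using rota_baxter_eq_0[OF assms(5,6)] by blast
qed

end
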